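(* Let $(X,d)$ be a compact metric space, $\lambda>0$, and $\ell\in\mathrm{LSC}(X)$ bounded with $\inf_X\ell=0$. Then: (i) if $u,v\in\mathrm{LSC}(X)$ are, respectively, a bounded subsolution and a bounded supersolution of $(\mathcal{G}_\lambda)$, then $u\le v$; (ii) the equation $(\mathcal{G}_\lambda)$ admits a unique (Lipschitz) solution.
   Context: $\mathrm{LSC}(X)$ is the set of real-valued lower semicontinuous functions on $X$. Global slope: $G[u](x)=\sup_{y\neq x}\frac{(u(x)-u(y))_+}{d(x,y)}$ if $u(x)<+\infty$, $G[u](x)=+\infty$ otherwise. Equation $(\mathcal{G}_\lambda)$: $\lambda u+G[u]=\ell$ on $X$ with $\inf_Xu=0$. A subsolution is $u:X\to\mathbb{R}\cup\{+\infty\}$ with $\inf_Xu=0$ and $\lambda u+G[u]\le\ell$ on $X$; a supersolution is a lower semicontinuous $v:X\to\mathbb{R}\cup\{+\infty\}$ with $\inf_Xv=0$ and $\lambda v+G[v]\ge\ell$ on $X$; a solution is a lower semicontinuous function that is both. *)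

theory Defs
  imports "HOL-Analysis.Analysis" "HOL-Library.Extended_Real"
begin

definition lsc :: "('a::topological_space \<Rightarrow> 'b::linorder_topology) \<Rightarrow> bool" where
  "lsc f \<longleftrightarrow> (\<forall>x. \<forall>c. c < f x \<longrightarrow> (\<forall>\<^sub>F y in nhds x. c < f y))"

text \<open>Global slope of u : X \<rightarrow> \<real> \<union> {+\<infinity>} (encoded in ereal; the value -\<infinity> is never
  used for the functions under consideration). The supremum of the empty family
  (one-point space) is taken to be 0, consistent with the positive parts.\<close>
definition global_slope :: "('a::metric_space \<Rightarrow> ereal) \<Rightarrow> 'a \<Rightarrow> ereal" where
  "global_slope u x =
     (if u x < \<infinity>
      then sup 0 (SUP y\<in>{y. y \<noteq> x}. max 0 (u x - u y) / ereal (dist x y))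
      else \<infinity>)"

definition no_minus_inf :: "('a \<Rightarrow> ereal) \<Rightarrow> bool" where
  "no_minus_inf u \<longleftrightarrow> (\<forall>x. u x \<noteq> -\<infinity>)"

definition is_subsolution :: "real \<Rightarrow> ('a::metric_space \<Rightarrow> real) \<Rightarrow> ('a \<Rightarrow> ereal) \<Rightarrow> bool" where
  "is_subsolution lam l u \<longleftrightarrow> no_minus_inf u \<and> (INF x. u x) = 0 \<and>
     (\<forall>x. ereal lam * u x + global_slope u x \<le> ereal (l x))"

definition is_supersolution :: "real \<Rightarrow> ('a::metric_space \<Rightarrow> real) \<Rightarrow> ('a \<Rightarrow> ereal) \<Rightarrow> bool" where
  "is_supersolution lam l v \<longleftrightarrow> no_minus_inf v \<and> lsc v \<and> (INF x. v x) = 0 \<and>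
     (\<forall>x. ereal lam * v x + global_slope v x \<ge> ereal (l x))"

definition is_solution :: "real \<Rightarrow> ('a::metric_space \<Rightarrow> real) \<Rightarrow> ('a \<Rightarrow> ereal) \<Rightarrow> bool" where
  "is_solution lam l w \<longleftrightarrow> lsc w \<and> is_subsolution lam l w \<and> is_supersolution lam l w"

end

theory Submission
  imports Defs
begin

(* A subsolution u is nonnegative (inf u = 0), so its global slope is at most l - lam u <= sup l
   and u is Lipschitz. Hence v - u is lower semicontinuous and attains its minimum on the compact
   space at some x0, where G[v](x0) <= G[u](x0); subtracting the two inequalities at x0 gives
   lam u(x0) <= lam v(x0), whence u <= v everywhere.
   Existence is Perron's method: the pointwise supremum w of all nonnegative subsolutions is again
   one. If w failed to be a supersolution at x0, then, l being lower semicontinuous, the maximum of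
   w and a small cone at x0 of slope slightly above G[w](x0) would be a larger subsolution. *)

lemma lsc_ereal_iff:
  fixes f :: "'a::topological_space \<Rightarrow> real"
  shows "lsc (\<lambda>x. ereal (f x)) \<longleftrightarrow> lsc f"
  unfolding lsc_def
proof (intro iffI allI impI)
  fix x and c :: real
  assume lsc: "\<forall>x c. c < ereal (f x) \<longrightarrow> (\<forall>\<^sub>F y in nhds x. c < ereal (f y))" and "c < f x"
  then have "ereal c < ereal (f x)" by simp
  with lsc have "\<forall>\<^sub>F y in nhds x. ereal c < ereal (f y)" by blast
  then show "\<forall>\<^sub>F y in nhds x. c < f y" by simp
next
  fix x and c :: ereal
  assume lsc: "\<forall>x c. c < f x \<longrightarrow> (\<forall>\<^sub>F y in nhds x. c < f y)" and "c < ereal (f x)"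
  then show "\<forall>\<^sub>F y in nhds x. c < ereal (f y)"
  proof (cases c)
    case (real r)
    with \<open>c < ereal (f x)\<close> lsc have "\<forall>\<^sub>F y in nhds x. r < f y" by simp
    with real show ?thesis by simp
  qed simp_all
qed

lemma continuous_imp_lsc:
  fixes f :: "'a::topological_space \<Rightarrow> 'b::linorder_topology"
  assumes "continuous_on UNIV f"
  shows "lsc f"
  unfolding lsc_def
proof (intro allI impI)
  fix x c assume "c < f x"
  moreover have "(f \<longlongrightarrow> f x) (nhds x)"
    using assms by (metis UNIV_I continuous_on_def tendsto_at_iff_tendsto_nhds)
  ultimately show "\<forall>\<^sub>F y in nhds x. c < f y"
    by (simp add: order_tendstoD(1))
qed

lemma lsc_diff_continuous:
  fixes v u :: "'a::topological_space \<Rightarrow> real"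
  assumes "lsc v" and "continuous_on UNIV u"
  shows "lsc (\<lambda>x. v x - u x)"
  unfolding lsc_def
proof (intro allI impI)
  fix x c assume c: "c < v x - u x"
  define e where "e = (v x - u x - c) / 2"
  have "e > 0" using c by (simp add: e_def)
  have "\<forall>\<^sub>F y in nhds x. v x - e < v y"
    using \<open>lsc v\<close> \<open>e > 0\<close> unfolding lsc_def by simp
  moreover have "\<forall>\<^sub>F y in nhds x. u y < u x + e"
  proof -
    have "(u \<longlongrightarrow> u x) (nhds x)"
      using assms(2) by (metis UNIV_I continuous_on_def tendsto_at_iff_tendsto_nhds)
    then show ?thesis using \<open>e > 0\<close> by (simp add: order_tendstoD(2))
  qed
  ultimately show "\<forall>\<^sub>F y in nhds x. c < v y - u y"
    by eventually_elim (simp add: e_def field_simps)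
qed

lemma lsc_attains_min:
  fixes f :: "'a::topological_space \<Rightarrow> 'b::linorder_topology"
  assumes "compact (UNIV :: 'a set)" and "lsc f"
  obtains x0 where "\<And>y. f x0 \<le> f y"
proof (rule ccontr)
  assume "\<not> thesis"
  with that have no_min: "\<forall>x. \<exists>z. f z < f x" by (meson not_le)
  define T where "T z = {y. f z < f y}" for z
  have "open (T z)" for z
  proof (rule open_subopen[THEN iffD2], intro ballI)
    fix y assume "y \<in> T z"
    then have "\<forall>\<^sub>F w in nhds y. f z < f w"
      using \<open>lsc f\<close> unfolding lsc_def T_def by blast
    then show "\<exists>U. open U \<and> y \<in> U \<and> U \<subseteq> T z"
      unfolding eventually_nhds T_def by blast
  qed
  moreover have "UNIV \<subseteq> (\<Union>z. T z)"
    using no_min by (auto simp: T_def)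
  ultimately obtain Z where "finite Z" and cover: "UNIV \<subseteq> (\<Union>z\<in>Z. T z)"
    by (rule compactE_image[OF assms(1)])
  then have "Z \<noteq> {}" by blast
  define j where "j = arg_min_on f Z"
  have "j \<in> Z" and j_min: "\<not> (\<exists>z\<in>Z. f z < f j)"
    unfolding j_def using arg_min_if_finite[OF \<open>finite Z\<close> \<open>Z \<noteq> {}\<close>] by blast+
  obtain i where "i \<in> Z" and "j \<in> T i"
    using cover by blast
  then show False
    using j_min by (auto simp: T_def)
qed

lemma global_slope_ereal:
  fixes u :: "'a::metric_space \<Rightarrow> real"
  shows "global_slope (\<lambda>x. ereal (u x)) x =
     sup 0 (SUP y\<in>{y. y \<noteq> x}. ereal (max 0 (u x - u y) / dist x y))"
proof -
  have "max 0 (ereal (u x) - ereal (u y)) / ereal (dist x y) = ereal (max 0 (u x - u y) / dist x y)"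
    if "y \<noteq> x" for y
    using that by (simp add: max_def)
  then show ?thesis
    unfolding global_slope_def by (auto intro!: SUP_cong arg_cong2[where f=sup])
qed

lemma global_slope_ereal_nonneg: "0 \<le> global_slope (\<lambda>x. ereal (u x)) x"
  unfolding global_slope_ereal by simp

lemma global_slope_ereal_le_iff:
  fixes u :: "'a::metric_space \<Rightarrow> real"
  shows "global_slope (\<lambda>x. ereal (u x)) x \<le> ereal c \<longleftrightarrow> 0 \<le> c \<and> (\<forall>y. u x - u y \<le> c * dist x y)"
proof -
  have quotient_le_iff: "ereal (max 0 (u x - u y) / dist x y) \<le> ereal c \<longleftrightarrow> u x - u y \<le> c * dist x y"
    if "0 \<le> c" "y \<noteq> x" for y
  proof -
    have "0 < dist x y" using that by simp
    then have "ereal (max 0 (u x - u y) / dist x y) \<le> ereal c \<longleftrightarrow> max 0 (u x - u y) \<le> c * dist x y"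
      by (simp add: pos_divide_le_eq mult.commute)
    also have "\<dots> \<longleftrightarrow> u x - u y \<le> c * dist x y"
      using mult_nonneg_nonneg[OF \<open>0 \<le> c\<close> zero_le_dist] by auto
    finally show ?thesis .
  qed
  show ?thesis
    unfolding global_slope_ereal sup.bounded_iff SUP_le_iff
    using quotient_le_iff by (cases "0 \<le> c") (auto, metis diff_self dist_self mult_zero_right order_refl)
qed

lemma global_slope_ereal_mono:
  fixes u v :: "'a::metric_space \<Rightarrow> real"
  assumes "\<And>y. v x - v y \<le> u x - u y"
  shows "global_slope (\<lambda>x. ereal (v x)) x \<le> global_slope (\<lambda>x. ereal (u x)) x"
  unfolding global_slope_ereal
proof (intro sup_mono SUP_mono)
  fix y assume "y \<in> {y. y \<noteq> x}"
  moreover have "max 0 (v x - v y) / dist x y \<le> max 0 (u x - u y) / dist x y"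
    using assms[of y] by (intro divide_right_mono max.mono) auto
  ultimately show "\<exists>z\<in>{y. y \<noteq> x}. ereal (max 0 (v x - v y) / dist x y) \<le> ereal (max 0 (u x - u z) / dist x z)"
    by auto
qed simp

lemma scaled_plus_global_slope_le_iff:
  fixes u :: "'a::metric_space \<Rightarrow> real"
  shows "ereal lam * ereal (u x) + global_slope (\<lambda>x. ereal (u x)) x \<le> ereal c \<longleftrightarrow>
     global_slope (\<lambda>x. ereal (u x)) x \<le> ereal (c - lam * u x)"
  using global_slope_ereal_nonneg[of u x]
  by (cases "global_slope (\<lambda>x. ereal (u x)) x") auto

lemma comparison_principle:
  fixes u v l :: "'a::metric_space \<Rightarrow> real"
  assumes "compact (UNIV :: 'a set)" and "lam > 0"
    and "continuous_on UNIV u" and "lsc v"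
    and sub: "\<And>x. ereal lam * ereal (u x) + global_slope (\<lambda>x. ereal (u x)) x \<le> ereal (l x)"
    and super: "\<And>x. ereal (l x) \<le> ereal lam * ereal (v x) + global_slope (\<lambda>x. ereal (v x)) x"
  shows "u x \<le> v x"
proof -
  obtain x0 where x0: "\<And>y. v x0 - u x0 \<le> v y - u y"
    using lsc_attains_min[OF assms(1) lsc_diff_continuous[OF assms(4,3)]] by blast
  have "v x0 - v y \<le> u x0 - u y" for y
    using x0[of y] by linarith
  then have "global_slope (\<lambda>x. ereal (v x)) x0 \<le> global_slope (\<lambda>x. ereal (u x)) x0"
    by (rule global_slope_ereal_mono)
  also have "\<dots> \<le> ereal (l x0 - lam * u x0)"
    using sub[of x0] unfolding scaled_plus_global_slope_le_iff .
  finally have slope_v: "global_slope (\<lambda>x. ereal (v x)) x0 \<le> ereal (l x0 - lam * u x0)" .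
  have "ereal (l x0) \<le> ereal (lam * v x0) + global_slope (\<lambda>x. ereal (v x)) x0"
    using super[of x0] by simp
  also have "\<dots> \<le> ereal (lam * v x0) + ereal (l x0 - lam * u x0)"
    using slope_v by (rule add_left_mono)
  finally have "lam * u x0 \<le> lam * v x0"
    by simp
  then have "u x0 \<le> v x0"
    using \<open>lam > 0\<close> by simp
  then show ?thesis
    using x0[of x] by linarith
qed

lemma subsolution_lipschitz:
  fixes u l :: "'a::metric_space \<Rightarrow> real"
  assumes "lam \<ge> 0" and "\<And>x. 0 \<le> u x" and "\<And>x. l x \<le> B"
    and sub: "\<And>x. ereal lam * ereal (u x) + global_slope (\<lambda>x. ereal (u x)) x \<le> ereal (l x)"
  shows "B-lipschitz_on UNIV u"
proof -
  have "global_slope (\<lambda>x. ereal (u x)) x \<le> ereal B" for x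
  proof -
    have "global_slope (\<lambda>x. ereal (u x)) x \<le> ereal (l x - lam * u x)"
      using sub[of x] unfolding scaled_plus_global_slope_le_iff .
    also have "\<dots> \<le> ereal B"
      using mult_nonneg_nonneg[OF assms(1) assms(2)[of x]] assms(3)[of x] by simp
    finally show ?thesis .
  qed
  then have "0 \<le> B" and increment: "\<And>x y. u x - u y \<le> B * dist x y"
    unfolding global_slope_ereal_le_iff by blast+
  show ?thesis
  proof (rule lipschitz_onI)
    fix x y
    show "dist (u x) (u y) \<le> B * dist x y"
      using increment[of x y] increment[of y x] by (simp add: dist_real_def abs_le_iff dist_commute)
  qed fact
qed

lemma subsolution_nonneg:
  assumes "is_subsolution lam l (\<lambda>x. ereal (u x))"
  shows "0 \<le> u x"
proof -
  have "(INF x. ereal (u x)) \<le> ereal (u x)" by (rule INF_lower) simp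
  with assms show ?thesis unfolding is_subsolution_def by simp
qed

lemma bounded_range_imp_le:
  fixes l :: "'a \<Rightarrow> real"
  assumes "bounded (range l)"
  obtains B where "\<And>x. l x \<le> B"
proof -
  obtain B where "\<forall>y\<in>range l. y \<le> B"
    using bounded_imp_bdd_above[OF assms] unfolding bdd_above_def by blast
  then show thesis using that[of B] by simp
qed

lemma subsolution_le_supersolution:
  fixes u v l :: "'a::metric_space \<Rightarrow> real"
  assumes "compact (UNIV :: 'a set)" and "lam > 0" and "bounded (range l)"
    and sub: "is_subsolution lam l (\<lambda>x. ereal (u x))"
    and super: "is_supersolution lam l (\<lambda>x. ereal (v x))"
  shows "u x \<le> v x"
proof (rule comparison_principle[OF assms(1,2)])
  show sub_ineq: "\<And>x. ereal lam * ereal (u x) + global_slope (\<lambda>x. ereal (u x)) x \<le> ereal (l x)"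
    using sub unfolding is_subsolution_def by blast
  show "\<And>x. ereal (l x) \<le> ereal lam * ereal (v x) + global_slope (\<lambda>x. ereal (v x)) x"
    using super unfolding is_supersolution_def by blast
  obtain B where "\<And>x. l x \<le> B"
    using bounded_range_imp_le[OF assms(3)] by blast
  then have "B-lipschitz_on UNIV u"
    using \<open>lam > 0\<close> subsolution_nonneg[OF sub] sub_ineq by (intro subsolution_lipschitz[of lam u l B]) auto
  then show "continuous_on UNIV u"
    by (rule lipschitz_on_continuous_on)
  show "lsc v"
    using super by (simp add: is_supersolution_def lsc_ereal_iff)
qed

lemma subsolution_real_valued:
  assumes "lam > 0" and "is_subsolution lam l w"
  shows "w = (\<lambda>x. ereal (real_of_ereal (w x)))"
proof
  fix x
  have "w x \<noteq> \<infinity>"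
  proof
    assume "w x = \<infinity>"
    then have infinite: "ereal lam * w x + global_slope w x = \<infinity>"
      using \<open>lam > 0\<close> by (simp add: global_slope_def)
    have "ereal lam * w x + global_slope w x \<le> ereal (l x)"
      using assms(2) unfolding is_subsolution_def by blast
    then show False unfolding infinite by simp
  qed
  moreover have "w x \<noteq> -\<infinity>"
    using assms(2) by (simp add: is_subsolution_def no_minus_inf_def)
  ultimately show "w x = ereal (real_of_ereal (w x))"
    by (cases "w x") auto
qed

(* The normalisation inf u = 0 of a subsolution is dropped here; the supremum of the family
   recovers it from lam w <= l and inf l = 0. *)
definition perron_family :: "real \<Rightarrow> ('a::metric_space \<Rightarrow> real) \<Rightarrow> ('a \<Rightarrow> real) set" where
  "perron_family lam l = {u. (\<forall>x. 0 \<le> u x) \<and> (\<forall>x. lam * u x \<le> l x) \<and>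
     (\<forall>x y. u x - u y \<le> (l x - lam * u x) * dist x y)}"

lemma perron_family_iff:
  "u \<in> perron_family lam l \<longleftrightarrow> (\<forall>x. 0 \<le> u x) \<and>
     (\<forall>x. ereal lam * ereal (u x) + global_slope (\<lambda>x. ereal (u x)) x \<le> ereal (l x))"
  unfolding perron_family_def scaled_plus_global_slope_le_iff global_slope_ereal_le_iff by auto

lemma perron_family_le:
  assumes "lam > 0" and "u \<in> perron_family lam l"
  shows "u x \<le> l x / lam"
  using assms by (simp add: perron_family_def pos_le_divide_eq mult.commute)

lemma bdd_above_perron_family:
  assumes "lam > 0" and "S \<subseteq> perron_family lam l"
  shows "bdd_above ((\<lambda>u. u x) ` S)"
  using assms(2) perron_family_le[OF assms(1)] by (intro bdd_aboveI2[where M = "l x / lam"]) blast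

lemma SUP_in_perron_family:
  assumes "lam > 0" and "S \<noteq> {}" and "S \<subseteq> perron_family lam l"
  shows "(\<lambda>x. SUP u\<in>S. u x) \<in> perron_family lam l"
proof -
  define w where "w x = (SUP u\<in>S. u x)" for x
  have le_w: "u x \<le> w x" if "u \<in> S" for u x
    unfolding w_def by (rule cSUP_upper[OF that bdd_above_perron_family[OF assms(1,3)]])
  have "0 \<le> w x" for x
  proof -
    obtain u where "u \<in> S" using assms(2) by blast
    then have "0 \<le> u x" using assms(3) by (auto simp: perron_family_def)
    also have "u x \<le> w x" using \<open>u \<in> S\<close> by (rule le_w)
    finally show ?thesis .
  qed
  moreover have "lam * w x \<le> l x" for x
  proof -
    have "w x \<le> l x / lam"
      unfolding w_def using assms(3) perron_family_le[OF assms(1)] by (intro cSUP_least[OF assms(2)]) blast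
    then show ?thesis using \<open>lam > 0\<close> by (simp add: pos_le_divide_eq mult.commute)
  qed
  moreover have "w x - w y \<le> (l x - lam * w x) * dist x y" for x y
  proof -
    \<comment> \<open>Solved for u x, the subsolution inequality of u is monotone in u y.\<close>
    define D where "D = 1 + lam * dist x y"
    have "D > 0" using \<open>lam > 0\<close> by (simp add: D_def add_pos_nonneg)
    have "u x \<le> (l x * dist x y + w y) / D" if "u \<in> S" for u
    proof -
      have "u x - u y \<le> (l x - lam * u x) * dist x y"
        using subsetD[OF assms(3) that] by (simp add: perron_family_def)
      with le_w[OF that, of y] have "u x * D \<le> l x * dist x y + w y"
        by (simp add: D_def algebra_simps)
      then show ?thesis using \<open>D > 0\<close> by (simp add: pos_le_divide_eq)
    qed
    then have "w x \<le> (l x * dist x y + w y) / D"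
      unfolding w_def using assms(2) by (intro cSUP_least) auto
    then have "w x * D \<le> l x * dist x y + w y" using \<open>D > 0\<close> by (simp add: pos_le_divide_eq)
    then show ?thesis by (simp add: D_def algebra_simps)
  qed
  ultimately show ?thesis
    unfolding perron_family_def w_def by blast
qed

lemma max_in_perron_family:
  assumes "w \<in> perron_family lam l"
    and above: "\<And>z. w z < \<phi> z \<Longrightarrow>
      lam * \<phi> z \<le> l z \<and> (\<forall>y. \<phi> z - \<phi> y \<le> (l z - lam * \<phi> z) * dist z y)"
  shows "(\<lambda>z. max (w z) (\<phi> z)) \<in> perron_family lam l"
proof -
  have "lam * max (w z) (\<phi> z) \<le> l z \<and>
      (\<forall>y. max (w z) (\<phi> z) - max (w y) (\<phi> y) \<le> (l z - lam * max (w z) (\<phi> z)) * dist z y)" for z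
  proof (cases "w z < \<phi> z")
    case True
    have "\<phi> z - max (w y) (\<phi> y) \<le> (l z - lam * \<phi> z) * dist z y" for y
    proof -
      have "\<phi> z - max (w y) (\<phi> y) \<le> \<phi> z - \<phi> y" by simp
      also have "\<dots> \<le> (l z - lam * \<phi> z) * dist z y" using above[OF True] by blast
      finally show ?thesis .
    qed
    with above[OF True] True show ?thesis by simp
  next
    case False
    have "w z - max (w y) (\<phi> y) \<le> (l z - lam * w z) * dist z y" for y
    proof -
      have "w z - max (w y) (\<phi> y) \<le> w z - w y" by simp
      also have "\<dots> \<le> (l z - lam * w z) * dist z y" using assms(1) by (simp add: perron_family_def)
      finally show ?thesis .
    qed
    with assms(1) False show ?thesis by (simp add: perron_family_def)
  qed
  moreover have "0 \<le> max (w z) (\<phi> z)" for z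
    using assms(1) by (simp add: perron_family_def le_max_iff_disj)
  ultimately show ?thesis
    unfolding perron_family_def by blast
qed

lemma perron_family_improve:
  fixes l :: "'a::metric_space \<Rightarrow> real"
  assumes "lam > 0" and "lsc l" and w: "w \<in> perron_family lam l" and "0 \<le> g"
    and slope: "\<And>y. w x0 - w y \<le> g * dist x0 y" and gap: "lam * w x0 + g < l x0"
  obtains w' where "w' \<in> perron_family lam l" and "w x0 < w' x0"
proof -
  define \<eta> where "\<eta> = (l x0 - lam * w x0 - g) / 3"
  have "\<eta> > 0" using gap by (simp add: \<eta>_def)
  have "\<forall>\<^sub>F z in nhds x0. l x0 - \<eta> < l z"
    using \<open>lsc l\<close> \<open>\<eta> > 0\<close> unfolding lsc_def by simp
  then obtain \<rho> where "\<rho> > 0" and near: "\<And>z. dist z x0 < \<rho> \<Longrightarrow> l x0 - \<eta> < l z"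
    unfolding eventually_nhds_metric by blast
  define t where "t = min (\<eta> * \<rho>) (\<eta> / lam)"
  have "t > 0" using \<open>\<eta> > 0\<close> \<open>\<rho> > 0\<close> \<open>lam > 0\<close> by (simp add: t_def)
  have "lam * t \<le> \<eta>"
  proof -
    have "t \<le> \<eta> / lam" by (simp add: t_def)
    then show ?thesis using \<open>lam > 0\<close> by (simp add: pos_le_divide_eq mult.commute)
  qed
  define K where "K = g + \<eta>"
  have "K \<ge> 0" using \<open>0 \<le> g\<close> \<open>\<eta> > 0\<close> by (simp add: K_def)
  define \<phi> where "\<phi> y = w x0 + t - K * dist x0 y" for y
  \<comment> \<open>The cone \<phi> rises above w only within distance \<rho> of x0, where l stays above l x0 - \<eta>.\<close>
  have slope_room: "K \<le> l z - lam * \<phi> z" if "w z < \<phi> z" for z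
  proof -
    have "\<eta> * dist x0 z < t"
      using that slope[of z] by (simp add: \<phi>_def K_def algebra_simps)
    also have "t \<le> \<eta> * \<rho>" by (simp add: t_def)
    finally have "dist z x0 < \<rho>"
      using \<open>\<eta> > 0\<close> by (simp add: dist_commute)
    moreover have "lam * \<phi> z \<le> lam * w x0 + lam * t"
    proof -
      have "\<phi> z \<le> w x0 + t" using \<open>K \<ge> 0\<close> by (simp add: \<phi>_def)
      then show ?thesis using \<open>lam > 0\<close> by (simp add: mult_left_mono flip: distrib_left)
    qed
    moreover have "l x0 = lam * w x0 + g + 3 * \<eta>"
      unfolding \<eta>_def by (simp add: field_simps)
    ultimately show ?thesis
      using near[of z] \<open>lam * t \<le> \<eta>\<close> unfolding K_def by linarith
  qed
  have "(\<lambda>z. max (w z) (\<phi> z)) \<in> perron_family lam l"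
  proof (rule max_in_perron_family[OF w])
    fix z assume "w z < \<phi> z"
    note room = slope_room[OF this]
    have "\<phi> z - \<phi> y \<le> (l z - lam * \<phi> z) * dist z y" for y
    proof -
      have "\<phi> z - \<phi> y = K * (dist x0 y - dist x0 z)" by (simp add: \<phi>_def algebra_simps)
      also have "\<dots> \<le> K * dist z y"
        using \<open>K \<ge> 0\<close> dist_triangle[of x0 y z] by (intro mult_left_mono) (auto simp: dist_commute)
      also have "\<dots> \<le> (l z - lam * \<phi> z) * dist z y"
        using room by (simp add: mult_right_mono)
      finally show ?thesis .
    qed
    moreover have "lam * \<phi> z \<le> l z"
      using room \<open>K \<ge> 0\<close> by linarith
    ultimately show "lam * \<phi> z \<le> l z \<and> (\<forall>y. \<phi> z - \<phi> y \<le> (l z - lam * \<phi> z) * dist z y)"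
      by blast
  qed
  moreover have "w x0 < max (w x0) (\<phi> x0)"
    using \<open>t > 0\<close> by (simp add: \<phi>_def)
  ultimately show ?thesis by (rule that)
qed

lemma perron_solution_exists:
  fixes l :: "'a::metric_space \<Rightarrow> real"
  assumes "lam > 0" and "\<And>x. 0 \<le> l x" and "lsc l"
  obtains w where "w \<in> perron_family lam l"
    and "\<And>x. ereal (l x) \<le> ereal lam * ereal (w x) + global_slope (\<lambda>x. ereal (w x)) x"
proof -
  define w where "w x = (SUP u\<in>perron_family lam l. u x)" for x
  have "(\<lambda>_. 0) \<in> perron_family lam l"
    using assms(2) by (simp add: perron_family_def)
  then have w_mem: "w \<in> perron_family lam l"
    unfolding w_def using \<open>lam > 0\<close> by (intro SUP_in_perron_family) auto
  have le_w: "u x \<le> w x" if "u \<in> perron_family lam l" for u x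
    unfolding w_def by (rule cSUP_upper[OF that bdd_above_perron_family[OF \<open>lam > 0\<close> order_refl]])
  have "ereal (l x0) \<le> ereal lam * ereal (w x0) + global_slope (\<lambda>x. ereal (w x)) x0" for x0
  proof (rule ccontr)
    assume not_super: "\<not> ?thesis"
    have "global_slope (\<lambda>x. ereal (w x)) x0 \<le> ereal (l x0 - lam * w x0)"
      using w_mem unfolding perron_family_iff scaled_plus_global_slope_le_iff by blast
    then obtain g where g: "global_slope (\<lambda>x. ereal (w x)) x0 = ereal g"
      using global_slope_ereal_nonneg[of w x0] by (cases "global_slope (\<lambda>x. ereal (w x)) x0") auto
    then have "0 \<le> g" and "\<And>y. w x0 - w y \<le> g * dist x0 y"
      using global_slope_ereal_le_iff[of w x0 g] by auto
    moreover have "lam * w x0 + g < l x0"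
      using not_super g by simp
    ultimately obtain w' where "w' \<in> perron_family lam l" and "w x0 < w' x0"
      using perron_family_improve[OF \<open>lam > 0\<close> \<open>lsc l\<close> w_mem] by blast
    then show False
      using le_w[of w' x0] by linarith
  qed
  with w_mem show ?thesis by (rule that)
qed

lemma INF_ereal_eq_0_if_scaled_le:
  fixes w l :: "'a \<Rightarrow> real"
  assumes "lam > 0" and "\<And>x. 0 \<le> w x" and "\<And>x. lam * w x \<le> l x"
    and "bdd_below (range l)" and "(INF x. l x) = 0"
  shows "(INF x. ereal (w x)) = 0"
proof (rule antisym)
  show "(INF x. ereal (w x)) \<le> 0"
  proof (rule ereal_le_epsilon2)
    fix e :: real assume "0 < e"
    then have "(INF x. l x) < lam * e" using assms(1,5) by simp
    then obtain x where "l x < lam * e"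
      using cINF_less_iff[OF UNIV_not_empty assms(4)] by blast
    with assms(3)[of x] have "lam * w x < lam * e" by linarith
    then have "w x < e" using assms(1) by simp
    then have "ereal (w x) \<le> 0 + ereal e" by simp
    then show "(INF x. ereal (w x)) \<le> 0 + ereal e"
      by (rule INF_lower2[OF UNIV_I])
  qed
qed (use assms(2) in \<open>simp add: INF_greatest\<close>)

lemma solution_exists:
  fixes l :: "'a::metric_space \<Rightarrow> real"
  assumes "lam > 0" and "lsc l" and "bounded (range l)" and "(INF x. l x) = 0"
  obtains w L where "is_solution lam l (\<lambda>x. ereal (w x))" and "L-lipschitz_on UNIV w"
proof -
  obtain B where l_le_B: "\<And>x. l x \<le> B"
    using bounded_range_imp_le[OF assms(3)] by blast
  have l_bdd_below: "bdd_below (range l)"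
    using assms(3) by (rule bounded_imp_bdd_below)
  then have "0 \<le> l x" for x
    using cINF_lower[OF l_bdd_below, of x] assms(4) by simp
  then obtain w where w_mem: "w \<in> perron_family lam l"
    and w_super: "\<And>x. ereal (l x) \<le> ereal lam * ereal (w x) + global_slope (\<lambda>x. ereal (w x)) x"
    using perron_solution_exists[OF assms(1) _ assms(2)] by blast
  have "\<And>x. 0 \<le> w x" and "\<And>x. lam * w x \<le> l x"
    using w_mem by (auto simp: perron_family_def)
  then have "(INF x. ereal (w x)) = 0"
    by (rule INF_ereal_eq_0_if_scaled_le[OF assms(1) _ _ l_bdd_below assms(4)])
  then have w_sub: "is_subsolution lam l (\<lambda>x. ereal (w x))"
    using w_mem unfolding is_subsolution_def no_minus_inf_def perron_family_iff by simp
  have w_lipschitz: "B-lipschitz_on UNIV w"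
    using w_mem l_le_B assms(1) unfolding perron_family_iff
    by (intro subsolution_lipschitz[of lam w l B]) auto
  then have "lsc (\<lambda>x. ereal (w x))"
    unfolding lsc_ereal_iff by (intro continuous_imp_lsc lipschitz_on_continuous_on)
  with w_sub w_super have "is_solution lam l (\<lambda>x. ereal (w x))"
    unfolding is_solution_def is_supersolution_def by (auto simp: is_subsolution_def)
  then show ?thesis using w_lipschitz by (rule that)
qed

lemma solution_unique:
  fixes w :: "'a::metric_space \<Rightarrow> real"
  assumes "compact (UNIV :: 'a set)" and "lam > 0" and "bounded (range l)"
    and w: "is_solution lam l (\<lambda>x. ereal (w x))" and w': "is_solution lam l w'"
  shows "w' = (\<lambda>x. ereal (w x))"
proof -
  have w'_real: "w' = (\<lambda>x. ereal (real_of_ereal (w' x)))"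
    using w' assms(2) by (intro subsolution_real_valued) (auto simp: is_solution_def)
  then have "is_solution lam l (\<lambda>x. ereal (real_of_ereal (w' x)))"
    using w' by simp
  then have "real_of_ereal (w' x) = w x" for x
    using w by (intro antisym subsolution_le_supersolution[OF assms(1-3)]) (auto simp: is_solution_def)
  then show ?thesis
    by (subst w'_real) simp
qed

theorem proposition3p13:
  fixes lam :: real and l :: "'a::metric_space \<Rightarrow> real"
  assumes "compact (UNIV :: 'a set)"
    and "lam > 0"
    and "lsc l" and "bounded (range l)" and "(INF x. l x) = 0"
  shows "(\<forall>u v :: 'a \<Rightarrow> real. lsc u \<and> lsc v \<and> bounded (range u) \<and> bounded (range v) \<and>
            is_subsolution lam l (\<lambda>x. ereal (u x)) \<and> is_supersolution lam l (\<lambda>x. ereal (v x))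
            \<longrightarrow> (\<forall>x. u x \<le> v x))
         \<and> (\<exists>w :: 'a \<Rightarrow> real. is_solution lam l (\<lambda>x. ereal (w x)) \<and> (\<exists>L. L-lipschitz_on UNIV w)
              \<and> (\<forall>w'. is_solution lam l w' \<longrightarrow> w' = (\<lambda>x. ereal (w x))))"
proof -
  have comparison: "\<forall>x. u x \<le> v x"
    if "is_subsolution lam l (\<lambda>x. ereal (u x))" and "is_supersolution lam l (\<lambda>x. ereal (v x))"
    for u v :: "'a \<Rightarrow> real"
    using subsolution_le_supersolution[OF assms(1,2,4) that] by blast
  obtain w L where w: "is_solution lam l (\<lambda>x. ereal (w x))" and "L-lipschitz_on UNIV w"
    using solution_exists[OF assms(2-5)] .
  moreover have "\<forall>w'. is_solution lam l w' \<longrightarrow> w' = (\<lambda>x. ereal (w x))"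
    using solution_unique[OF assms(1,2,4) w] by blast
  ultimately show ?thesis
    using comparison by blast
qed

end
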